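(* Let $d\ge 1$, $e=2^d$, and let $a=a_1\cdots a_{d+e}\in\{0,1\}^{d+e}$ satisfy $\overline{a_1\cdots a_d}=a_{e+1}\cdots a_{e+d}$ (bitwise complement). Let $k$ be the number of indices $z\in\{d,\dots,e\}$ with $a_z=0$. Write $\lambda_d$ as the concatenation of the $2^e$ blocks $M_dw_0,\dots,M_dw_{2^e-1}$, each of length $e$. Then the number of pairs $(n,z)$ with $n$ even, $0\le n\le 2^e-2$, $d\le z\le e$, such that $a$ occurs in $\lambda_d$ starting at position $e-z+1$ of the block $M_dw_n$ (so that $a_1\cdots a_z$ is the suffix of length $z$ of $M_dw_n$ and $a_{z+1}\cdots a_{d+e}$ is the prefix of length $d+e-z$ of $M_dw_{n+1}$) is exactly $k$.
   Context: Over $\mathbb{F}_2$, $M_0=(1)$ and $M_{d+1}=\begin{pmatrix} M_d & M_d\\ 0 & M_d\end{pmatrix}$, so $M_d$ is $e\times e$ with $e=2^d$. $w_0,\dots,w_{2^e-1}$ are all vectors of $\mathbb{F}_2^e$ in increasing lexicographic order ($w_n$ is the $e$-bit binary representation of $n$, most significant bit first). Binary words and vectors are identified. $\lambda_d=(M_dw_0)(M_dw_1)\cdots(M_dw_{2^e-1})$. For a binary word $u$, $\overline{u}$ denotes its bitwise complement. *)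

theory Defs
  imports Main
begin

text \<open>Bits of F_2 are represented as bool (True = 1). Indices are 0-based.\<close>

text \<open>The matrix M_d, as an entry function on indices i, j < 2^d:
  M_0 = (1), M_{d+1} = [[M_d, M_d], [0, M_d]].\<close>
fun Mmat :: "nat \<Rightarrow> nat \<Rightarrow> nat \<Rightarrow> bool" where
  "Mmat 0 i j = True"
| "Mmat (Suc d) i j =
     (let e = 2 ^ d in
      if i < e then (if j < e then Mmat d i j else Mmat d i (j - e))
      else (if j < e then False else Mmat d (i - e) (j - e)))"

text \<open>w_n: the e-bit binary representation of n, most significant bit first.\<close>
definition wvec :: "nat \<Rightarrow> nat \<Rightarrow> nat \<Rightarrow> bool" where
  "wvec e n j = odd (n div 2 ^ (e - 1 - j))"

definition block :: "nat \<Rightarrow> nat \<Rightarrow> bool list" where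
  "block d n = map (\<lambda>i. odd (card {j. j < 2 ^ d \<and> Mmat d i j \<and> wvec (2 ^ d) n j})) [0..<2 ^ d]"

definition lam :: "nat \<Rightarrow> bool list" where
  "lam d = concat (map (block d) [0..<2 ^ (2 ^ d)])"

end

theory Submission
  imports Defs
begin

text \<open>Over \<open>\<bbbF>\<^sub>2\<close> the matrix \<open>M\<^sub>d\<close> is an involution whose last row is the last unit vector
  and whose last column is all ones. Hence the last bit of \<open>M\<^sub>d w\<^sub>n\<close> is the parity of \<open>n\<close>,
  and for even \<open>n\<close> the block \<open>M\<^sub>d w\<^sub>n\<^sub>+\<^sub>1\<close> is the complement of \<open>M\<^sub>d w\<^sub>n\<close>. An occurrence
  of \<open>a\<close> starting at offset \<open>e - z\<close> of an even block therefore reads the last \<open>z\<close> bits of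
  that block followed by the complement of its first \<open>d + e - z\<close> bits; by the complement
  condition on \<open>a\<close> this happens exactly when the block equals one word determined by \<open>a\<close>
  and \<open>z\<close>, whose last bit is \<open>a\<^sub>z\<close>. Since \<open>M\<^sub>d\<close> is invertible, that word is \<open>M\<^sub>d w\<^sub>n\<close> for
  exactly one \<open>n\<close>, and this \<open>n\<close> is even iff \<open>a\<^sub>z = 0\<close>.\<close>

fun parity :: "nat \<Rightarrow> (nat \<Rightarrow> bool) \<Rightarrow> bool" where
  "parity 0 P = False"
| "parity (Suc n) P = (parity n P \<noteq> P n)"

lemma odd_card_eq_parity: "odd (card {j. j < n \<and> P j}) = parity n P"
proof (induction n)
  case (Suc n)
  have "{j. j < Suc n \<and> P j} = (if P n then insert n else id) {j. j < n \<and> P j}"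
    by (auto simp: less_Suc_eq)
  then show ?case using Suc by simp
qed simp

lemma parity_add: "parity (m + n) P = (parity m P \<noteq> parity n (\<lambda>j. P (j + m)))"
  by (induction n) (auto simp: add.commute)

lemma parity_xor: "parity n (\<lambda>j. P j \<noteq> Q j) = (parity n P \<noteq> parity n Q)"
  by (induction n) auto

lemma parity_cong: "(\<And>j. j < n \<Longrightarrow> P j = Q j) \<Longrightarrow> parity n P = parity n Q"
  by (induction n) auto

lemma parity_False [simp]: "parity n (\<lambda>j. False) = False"
  by (induction n) auto

lemma parity_singleton: "parity n (\<lambda>j. j = k \<and> P j) = (k < n \<and> P k)"
  by (induction n) auto

definition Mvec :: "nat \<Rightarrow> (nat \<Rightarrow> bool) \<Rightarrow> nat \<Rightarrow> bool" where
  "Mvec d f i = parity (2 ^ d) (\<lambda>j. Mmat d i j \<and> f j)"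

lemma Mvec_cong: "(\<And>j. j < 2 ^ d \<Longrightarrow> f j = g j) \<Longrightarrow> Mvec d f i = Mvec d g i"
  unfolding Mvec_def by (rule parity_cong) auto

lemma Mvec_xor: "Mvec d (\<lambda>j. f j \<noteq> g j) i = (Mvec d f i \<noteq> Mvec d g i)"
  unfolding Mvec_def parity_xor [symmetric] by (rule parity_cong) auto

lemma Mvec_Suc:
  "Mvec (Suc d) f i =
     (if i < 2 ^ d then Mvec d f i \<noteq> Mvec d (\<lambda>j. f (j + 2 ^ d)) i
      else Mvec d (\<lambda>j. f (j + 2 ^ d)) (i - 2 ^ d))"
proof -
  have "Mvec (Suc d) f i = (parity (2 ^ d) (\<lambda>j. Mmat (Suc d) i j \<and> f j) \<noteq>
        parity (2 ^ d) (\<lambda>j. Mmat (Suc d) i (j + 2 ^ d) \<and> f (j + 2 ^ d)))"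
    unfolding Mvec_def using parity_add [of "2 ^ d" "2 ^ d"] by (simp add: mult_2)
  moreover have "parity (2 ^ d) (\<lambda>j. Mmat (Suc d) i j \<and> f j) =
      (i < 2 ^ d \<and> Mvec d f i)"
    unfolding Mvec_def by (cases "i < 2 ^ d") (simp_all add: Let_def cong: parity_cong)
  moreover have "parity (2 ^ d) (\<lambda>j. Mmat (Suc d) i (j + 2 ^ d) \<and> f (j + 2 ^ d)) =
      Mvec d (\<lambda>j. f (j + 2 ^ d)) (if i < 2 ^ d then i else i - 2 ^ d)"
    unfolding Mvec_def by (simp add: Let_def)
  ultimately show ?thesis by simp
qed

lemma Mvec_Mvec: "i < 2 ^ d \<Longrightarrow> Mvec d (Mvec d f) i = f i"
proof (induction d arbitrary: f i)
  case 0
  then show ?case by (simp add: Mvec_def)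
next
  case (Suc d)
  define g where "g = (\<lambda>j. f (j + 2 ^ d))"
  have upper_half: "(\<lambda>j. Mvec (Suc d) f (j + 2 ^ d)) = Mvec d g"
    by (simp add: Mvec_Suc g_def)
  show ?case
  proof (cases "i < 2 ^ d")
    case True
    have "Mvec d (Mvec (Suc d) f) i = Mvec d (\<lambda>j. Mvec d f j \<noteq> Mvec d g j) i"
      by (rule Mvec_cong) (simp add: Mvec_Suc g_def)
    also have "\<dots> = (f i \<noteq> g i)"
      using True by (simp only: Mvec_xor Suc.IH)
    finally have "Mvec d (Mvec (Suc d) f) i = (f i \<noteq> g i)" .
    then show ?thesis
      using True by (auto simp: Mvec_Suc [of d "Mvec (Suc d) f"] upper_half Suc.IH g_def)
  next
    case False
    then show ?thesis
      using Suc.prems by (simp add: Mvec_Suc [of d "Mvec (Suc d) f"] upper_half Suc.IH g_def)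
        (simp add: not_less)
  qed
qed

lemma Mmat_last_column: "i < 2 ^ d \<Longrightarrow> Mmat d i (2 ^ d - 1)"
  by (induction d arbitrary: i) (auto simp: Let_def)

lemma Mmat_last_row: "j < 2 ^ d \<Longrightarrow> Mmat d (2 ^ d - 1) j = (j = 2 ^ d - 1)"
  by (induction d arbitrary: j) (auto simp: Let_def)

lemma Mvec_last: "Mvec d f (2 ^ d - 1) = f (2 ^ d - 1)"
proof -
  have "Mvec d f (2 ^ d - 1) = parity (2 ^ d) (\<lambda>j. j = 2 ^ d - 1 \<and> f j)"
    unfolding Mvec_def by (intro parity_cong) (metis Mmat_last_row)
  then show ?thesis by (simp add: parity_singleton)
qed

lemma Mvec_last_unit: "i < 2 ^ d \<Longrightarrow> Mvec d (\<lambda>j. j = 2 ^ d - 1) i"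
proof -
  assume "i < 2 ^ d"
  then have "Mvec d (\<lambda>j. j = 2 ^ d - 1) i = parity (2 ^ d) (\<lambda>j. j = 2 ^ d - 1 \<and> True)"
    unfolding Mvec_def by (intro parity_cong) (metis Mmat_last_column)
  then show ?thesis using parity_singleton [of "2 ^ d" "2 ^ d - 1" "\<lambda>_. True"] by simp
qed

lemma length_block [simp]: "length (block d n) = 2 ^ d"
  by (simp add: block_def)

lemma nth_block: "i < 2 ^ d \<Longrightarrow> block d n ! i = Mvec d (wvec (2 ^ d) n) i"
  by (simp add: block_def Mvec_def odd_card_eq_parity conj_assoc)

lemma last_block: "last (block d n) = odd n"
proof -
  have "block d n \<noteq> []"
    using length_block [of d n] by (metis list.size(3) power_not_zero zero_neq_numeral)
  then have "last (block d n) = block d n ! (2 ^ d - 1)"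
    by (simp add: last_conv_nth)
  also have "\<dots> = wvec (2 ^ d) n (2 ^ d - 1)"
    using Mvec_last [of d "wvec (2 ^ d) n"] by (simp add: nth_block)
  finally show ?thesis by (simp add: wvec_def)
qed

lemma wvec_eq_bit: "wvec e n j = bit n (e - 1 - j)"
  by (simp add: wvec_def bit_iff_odd)

lemma wvec_Suc_even: "even n \<Longrightarrow> j < e \<Longrightarrow> wvec e (n + 1) j = (wvec e n j \<noteq> (j = e - 1))"
  using even_bit_succ_iff [of n "e - 1 - j"] by (auto simp: wvec_eq_bit add.commute bit_0)

(* w (n+1) = w n + e_last for even n, and M_d e_last is the all-ones column. *)
lemma block_Suc_even: "even n \<Longrightarrow> block d (n + 1) = map Not (block d n)"
proof (rule nth_equalityI)
  fix i assume n: "even n" and "i < length (block d (n + 1))"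
  then have i: "i < 2 ^ d" by simp
  have "block d (n + 1) ! i = Mvec d (\<lambda>j. wvec (2 ^ d) n j \<noteq> (j = 2 ^ d - 1)) i"
    unfolding nth_block [OF i] by (rule Mvec_cong) (use wvec_Suc_even [OF n] in simp)
  also have "\<dots> = (\<not> block d n ! i)"
    unfolding Mvec_xor using i Mvec_last_unit [OF i] by (simp add: nth_block)
  finally show "block d (n + 1) ! i = map Not (block d n) ! i"
    using i by simp
qed simp

lemma wvec_inj:
  assumes "n < 2 ^ e" "m < 2 ^ e" "\<And>j. j < e \<Longrightarrow> wvec e n j = wvec e m j"
  shows "n = m"
proof -
  have bits: "bit n k = bit m k" if "k < e" for k
    using assms(3) [of "e - 1 - k"] that by (simp add: wvec_eq_bit)
  have "take_bit e n = take_bit e m"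
    by (intro bit_eqI) (auto simp: bit_take_bit_iff bits)
  then show ?thesis using assms by (simp add: take_bit_nat_eq_self)
qed

lemma inj_on_block: "inj_on (block d) {..<2 ^ 2 ^ d}"
proof (rule inj_onI)
  fix n m assume "n \<in> {..<2 ^ 2 ^ d}" "m \<in> {..<2 ^ 2 ^ d}" "block d n = block d m"
  moreover have "wvec (2 ^ d) k j = Mvec d (\<lambda>i. block d k ! i) j" if "j < 2 ^ d" for k j
    using that by (simp add: nth_block Mvec_Mvec cong: Mvec_cong)
  ultimately show "n = m" by (intro wvec_inj) auto
qed

lemma image_block: "block d ` {..<2 ^ 2 ^ d} = {x. length x = 2 ^ d}"
proof -
  let ?L = "{x :: bool list. set x \<subseteq> UNIV \<and> length x = 2 ^ d}"
  have "block d ` {..<2 ^ 2 ^ d} = ?L"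
  proof (rule card_subset_eq)
    show "finite ?L" by (rule finite_lists_length_eq) simp
    show "block d ` {..<2 ^ 2 ^ d} \<subseteq> ?L" by auto
    show "card (block d ` {..<2 ^ 2 ^ d}) = card ?L"
      using inj_on_block card_lists_length_eq [of "UNIV :: bool set" "2 ^ d"]
      by (simp add: card_image)
  qed
  then show ?thesis by simp
qed

lemma take_drop_concat_uniform:
  assumes "\<forall>y \<in> set ys. length y = e" "Suc n < length ys" "k \<le> e" "l \<le> e"
  shows "take (e - k + l) (drop (n * e + k) (concat ys)) = drop k (ys ! n) @ take l (ys ! Suc n)"
  using assms
proof (induction ys arbitrary: n)
  case (Cons y ys)
  show ?case
  proof (cases n)
    case 0
    with Cons.prems obtain y' ys' where "ys = y' # ys'" "length y = e" "length y' = e"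
      by (cases ys) auto
    with Cons.prems 0 show ?thesis by simp
  next
    case (Suc m)
    with Cons show ?thesis by (simp add: add.assoc)
  qed
qed simp

lemma lam_window:
  assumes "Suc n < 2 ^ 2 ^ d" "d \<le> z" "z \<le> 2 ^ d"
  shows "take (d + 2 ^ d) (drop (n * 2 ^ d + (2 ^ d - z)) (lam d)) =
         drop (2 ^ d - z) (block d n) @ take (d + 2 ^ d - z) (block d (Suc n))"
proof -
  have length: "d + 2 ^ d = 2 ^ d - (2 ^ d - z) + (d + 2 ^ d - z)"
    using assms by simp
  show ?thesis
    unfolding lam_def using assms by (subst (1) length) (subst take_drop_concat_uniform; simp)
qed

(* The block x with a = (last z bits of x) @ (complement of the first d + e - z bits of x). *)
definition forced_block :: "nat \<Rightarrow> bool list \<Rightarrow> nat \<Rightarrow> bool list" where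
  "forced_block e a z = map Not (take (e - z) (drop z a)) @ take z a"

lemma length_forced_block: "z \<le> e \<Longrightarrow> e \<le> length a \<Longrightarrow> length (forced_block e a z) = e"
  by (simp add: forced_block_def)

lemma last_forced_block: "0 < z \<Longrightarrow> z \<le> length a \<Longrightarrow> last (forced_block e a z) = a ! (z - 1)"
  by (auto simp: forced_block_def last_append last_conv_nth min_def)

lemma window_eq_iff:
  fixes x a :: "bool list"
  assumes "length x = e" "length a = d + e" "drop e a = map Not (take d a)" "d \<le> z" "z \<le> e"
  shows "drop (e - z) x @ take (d + e - z) (map Not x) = a \<longleftrightarrow>
         x = forced_block e a z"
proof -
  define u v where "u = take (e - z) x" and "v = drop (e - z) x"
  define p q where "p = take z a" and "q = take (e - z) (drop z a)"
  have x: "x = u @ v" "length u = e - z" "length v = z"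
    using assms by (simp_all add: u_def v_def)
  have "a = p @ q @ drop e a"
    using assms unfolding p_def q_def by (metis append_take_drop_id drop_drop le_add_diff_inverse2)
  then have a: "a = p @ q @ map Not (take d p)" "length p = z"
    using assms by (simp_all add: p_def min_absorb1)
  have "drop (e - z) x @ take (d + e - z) (map Not x) = v @ map Not u @ map Not (take d v)"
    using assms x by (simp add: take_map)
  also have "\<dots> = a \<longleftrightarrow> v = p \<and> u = map Not q"
    using x a by (auto simp: comp_def)
  also have "\<dots> \<longleftrightarrow> x = map Not q @ p"
    using x a by auto
  finally show ?thesis unfolding forced_block_def p_def q_def .
qed

lemma occurrence_in_lam_iff:
  assumes "d \<ge> 1" "length a = d + 2 ^ d" "\<forall>i < d. a ! (2 ^ d + i) = (\<not> a ! i)"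
    and "d \<le> z" "z \<le> 2 ^ d"
  shows "even n \<and> n \<le> 2 ^ 2 ^ d - 2 \<and> take (d + 2 ^ d) (drop (n * 2 ^ d + (2 ^ d - z)) (lam d)) = a
     \<longleftrightarrow> n < 2 ^ 2 ^ d \<and> block d n = forced_block (2 ^ d) a z \<and> \<not> a ! (z - 1)"
proof -
  have complement: "drop (2 ^ d) a = map Not (take d a)"
    using assms(2,3) by (simp add: list_eq_iff_nth_eq)
  have "even (2 ^ 2 ^ d :: nat)" "(2 :: nat) \<le> 2 ^ 2 ^ d"
    using self_le_power [of 2 "2 ^ d"] by simp_all
  then have range: "n \<le> 2 ^ 2 ^ d - 2 \<longleftrightarrow> Suc n < 2 ^ 2 ^ d" "n < 2 ^ 2 ^ d \<longleftrightarrow> Suc n < 2 ^ 2 ^ d"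
    if "even n"
    using that by presburger+
  have occurrence: "take (d + 2 ^ d) (drop (n * 2 ^ d + (2 ^ d - z)) (lam d)) = a \<longleftrightarrow>
      block d n = forced_block (2 ^ d) a z" if "even n" "Suc n < 2 ^ 2 ^ d"
    using lam_window [OF that(2) assms(4,5)] block_Suc_even [OF that(1)]
      window_eq_iff [of "block d n" "2 ^ d" a d z] assms(2,4,5) complement
    by simp
  have "last (forced_block (2 ^ d) a z) = a ! (z - 1)"
    using assms by (intro last_forced_block) simp_all
  then have "block d n = forced_block (2 ^ d) a z \<Longrightarrow> odd n = a ! (z - 1)"
    by (metis last_block)
  then show ?thesis
    using range occurrence by (cases "even n") auto
qed

lemma card_matching_pairs:
  assumes "inj_on f N" "g ` R \<subseteq> f ` N"
  shows "card {(n, z). z \<in> R \<and> n \<in> N \<and> f n = g z} = card R"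
proof (rule bij_betw_same_card [of snd], rule bij_betw_imageI)
  show "inj_on snd {(n, z). z \<in> R \<and> n \<in> N \<and> f n = g z}"
    using assms(1) by (auto intro!: inj_onI simp: inj_on_def)
  show "snd ` {(n, z). z \<in> R \<and> n \<in> N \<and> f n = g z} = R"
    using assms(2) by (force simp: image_iff)
qed

theorem mainTheorem7:
  fixes d :: nat and a :: "bool list"
  assumes "d \<ge> 1"
    and "length a = d + 2 ^ d"
    and "\<forall>i < d. a ! (2 ^ d + i) = (\<not> a ! i)"
  shows "card {(n, z). even n \<and> n \<le> 2 ^ (2 ^ d) - 2 \<and> d \<le> z \<and> z \<le> 2 ^ d \<and>
                take (d + 2 ^ d) (drop (n * 2 ^ d + (2 ^ d - z)) (lam d)) = a}
       = card {z. d \<le> z \<and> z \<le> 2 ^ d \<and> \<not> a ! (z - 1)}"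
    (is "card ?S = card ?R")
proof -
  let ?T = "{(n, z). z \<in> ?R \<and> n \<in> {..<2 ^ 2 ^ d} \<and> block d n = forced_block (2 ^ d) a z}"
  have "?S = ?T"
  proof (rule set_eqI)
    fix p :: "nat \<times> nat"
    obtain n z where p: "p = (n, z)" by fastforce
    show "p \<in> ?S \<longleftrightarrow> p \<in> ?T"
      unfolding p mem_Collect_eq case_prod_conv lessThan_iff
      using occurrence_in_lam_iff [OF assms, of z n] by blast
  qed
  moreover have "forced_block (2 ^ d) a ` ?R \<subseteq> block d ` {..<2 ^ 2 ^ d}"
    using assms(2) by (auto simp: image_block length_forced_block)
  then have "card ?T = card ?R"
    by (rule card_matching_pairs [OF inj_on_block])
  ultimately show ?thesis by simp
qed

end
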